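(* Let $X$ be a topological space and consider the topological group $C_p(X)$. Then the following properties of $C_p(X)$ are all equivalent: $\alpha_{2^-}$, $\alpha_2$, $\alpha_{3^-}$, $\alpha_3$, $\alpha_4$, locally Ramsey, and Ramsey.
   Context: $C_p(X)$ is the group of continuous real-valued functions on $X$ with the topology of pointwise convergence. Convention: a "sequence" is a countably infinite set; a countably infinite set $A$ converges to $x$ if $x\notin A$ and every neighborhood of $x$ contains all but finitely many elements of $A$. $\lim_m x_{nm}=x$ means $x_{nm}\neq x$ for all $m$ and every neighborhood of $x$ contains $x_{nm}$ for all but finitely many $m$. A space $Y$ is $\alpha_i$ ($i=2,3,4$) if for each $y\in Y$ and all pairwise disjoint sequences $S_1,S_2,\dots\subseteq Y$ each converging to $y$, there is a sequence $S\subseteq\bigcup_nS_n$ converging to $y$ such that, respectively: ($\alpha_2$) $S_n\cap S$ is infinite for all $n$; ($\alpha_3$) $S_n\cap S$ is infinite for infinitely many $n$; ($\alpha_4$) $S_n\cap S$ is nonempty for infinitely many $n$. $Y$ is $\alpha_{2^-}$ if for each $y$, whenever $\lim_m x_{nm}=y$ for all $n$, there are $m_1<m_2<\dots$ with $\bigcup_n\{x_{1m_n},\dots,x_{nm_n}\}$ converging to $y$. $Y$ is $\alpha_{3^-}$ if for each $y$, whenever $\lim_m x_{nm}=y$ for all $n$, there are infinite $I,J\subseteq\mathbb N$ with $\{x_{nm}:n\in I, m\in J, n<m\}$ converging to $y$. $Y$ is locally Ramsey if for each $y$, whenever $\lim_m x_{nm}=y$ for all $n$, there is an infinite $I\subseteq\mathbb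 N$ with $\{x_{nm}: n,m\in I, n<m\}$ converging to $y$. $Y$ is Ramsey if whenever $\lim_m x_{nm}=x_n$ for each $n$ and $\lim_n x_n=y$, there is an infinite $I\subseteq\mathbb N$ such that for each neighborhood $U$ of $y$ there is $k$ with $\{x_{nm}: k<n<m,\ n,m\in I\}\subseteq U$. *)

theory Defs
  imports "HOL-Analysis.Analysis"
begin

text \<open>C_p(X): continuous real-valued functions on X with the topology of pointwise
convergence, i.e. the subspace of the product topology on (topspace X \<rightarrow> real)
(functions are taken extensional, i.e. undefined outside topspace X).\<close>
definition Cp :: "'a topology \<Rightarrow> ('a \<Rightarrow> real) topology" where
  "Cp X = subtopology (product_topology (\<lambda>_. euclideanreal) (topspace X))
            {f \<in> topspace (product_topology (\<lambda>_. euclideanreal) (topspace X)).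
               continuous_map X euclideanreal f}"

text \<open>A sequence (countably infinite set) A converging to y.\<close>
definition conv_set :: "'b topology \<Rightarrow> 'b set \<Rightarrow> 'b \<Rightarrow> bool" where
  "conv_set Y A y \<longleftrightarrow> A \<subseteq> topspace Y \<and> countable A \<and> infinite A \<and> y \<notin> A \<and>
     (\<forall>U. openin Y U \<and> y \<in> U \<longrightarrow> finite (A - U))"

definition seq_lim :: "'b topology \<Rightarrow> (nat \<Rightarrow> 'b) \<Rightarrow> 'b \<Rightarrow> bool" where
  "seq_lim Y x y \<longleftrightarrow> (\<forall>m. x m \<in> topspace Y \<and> x m \<noteq> y) \<and>
     (\<forall>U. openin Y U \<and> y \<in> U \<longrightarrow> (\<forall>\<^sub>F m in sequentially. x m \<in> U))"

definition alpha2 :: "'b topology \<Rightarrow> bool" where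
  "alpha2 Y \<longleftrightarrow> (\<forall>y \<in> topspace Y. \<forall>S :: nat \<Rightarrow> 'b set.
     (\<forall>n m. n \<noteq> m \<longrightarrow> S n \<inter> S m = {}) \<and> (\<forall>n. conv_set Y (S n) y) \<longrightarrow>
     (\<exists>T. T \<subseteq> (\<Union>n. S n) \<and> conv_set Y T y \<and> (\<forall>n. infinite (S n \<inter> T))))"

definition alpha3 :: "'b topology \<Rightarrow> bool" where
  "alpha3 Y \<longleftrightarrow> (\<forall>y \<in> topspace Y. \<forall>S :: nat \<Rightarrow> 'b set.
     (\<forall>n m. n \<noteq> m \<longrightarrow> S n \<inter> S m = {}) \<and> (\<forall>n. conv_set Y (S n) y) \<longrightarrow>
     (\<exists>T. T \<subseteq> (\<Union>n. S n) \<and> conv_set Y T y \<and> infinite {n. infinite (S n \<inter> T)}))"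

definition alpha4 :: "'b topology \<Rightarrow> bool" where
  "alpha4 Y \<longleftrightarrow> (\<forall>y \<in> topspace Y. \<forall>S :: nat \<Rightarrow> 'b set.
     (\<forall>n m. n \<noteq> m \<longrightarrow> S n \<inter> S m = {}) \<and> (\<forall>n. conv_set Y (S n) y) \<longrightarrow>
     (\<exists>T. T \<subseteq> (\<Union>n. S n) \<and> conv_set Y T y \<and> infinite {n. S n \<inter> T \<noteq> {}}))"

text \<open>Indices start at 0 here; {x_1m_n,...,x_nm_n} becomes {x k (m n) | k \<le> n}.\<close>
definition alpha2m :: "'b topology \<Rightarrow> bool" where
  "alpha2m Y \<longleftrightarrow> (\<forall>y \<in> topspace Y. \<forall>x :: nat \<Rightarrow> nat \<Rightarrow> 'b.
     (\<forall>n. seq_lim Y (x n) y) \<longrightarrow>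
     (\<exists>m :: nat \<Rightarrow> nat. strict_mono m \<and>
        conv_set Y (\<Union>n. {x k (m n) | k. k \<le> n}) y))"

definition alpha3m :: "'b topology \<Rightarrow> bool" where
  "alpha3m Y \<longleftrightarrow> (\<forall>y \<in> topspace Y. \<forall>x :: nat \<Rightarrow> nat \<Rightarrow> 'b.
     (\<forall>n. seq_lim Y (x n) y) \<longrightarrow>
     (\<exists>I J :: nat set. infinite I \<and> infinite J \<and>
        conv_set Y {x n m | n m. n \<in> I \<and> m \<in> J \<and> n < m} y))"

definition locally_Ramsey :: "'b topology \<Rightarrow> bool" where
  "locally_Ramsey Y \<longleftrightarrow> (\<forall>y \<in> topspace Y. \<forall>x :: nat \<Rightarrow> nat \<Rightarrow> 'b.
     (\<forall>n. seq_lim Y (x n) y) \<longrightarrow>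
     (\<exists>I :: nat set. infinite I \<and>
        conv_set Y {x n m | n m. n \<in> I \<and> m \<in> I \<and> n < m} y))"

definition Ramsey :: "'b topology \<Rightarrow> bool" where
  "Ramsey Y \<longleftrightarrow> (\<forall>y \<in> topspace Y. \<forall>x :: nat \<Rightarrow> nat \<Rightarrow> 'b. \<forall>z :: nat \<Rightarrow> 'b.
     (\<forall>n. seq_lim Y (x n) (z n)) \<and> seq_lim Y z y \<longrightarrow>
     (\<exists>I :: nat set. infinite I \<and>
        (\<forall>U. openin Y U \<and> y \<in> U \<longrightarrow>
           (\<exists>k. {x n m | n m. k < n \<and> n < m \<and> n \<in> I \<and> m \<in> I} \<subseteq> U))))"

end

theory Submission
  imports Defs
begin

text \<open>All seven properties of \<open>Cp X\<close> are equivalent to a diagonal property of \<open>X\<close> itself: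
  whenever the rows of a double sequence of non-negative continuous functions on \<open>X\<close> converge
  pointwise to \<open>0\<close>, some strictly increasing choice of one column per row converges pointwise
  to \<open>0\<close>. Given this property, the selections demanded by \<open>alpha2m\<close>, local Ramsey and Ramsey
  are obtained by diagonalising the summed deviations of the first \<open>n\<close> rows from their limits.
  The implications \<open>alpha2m \<Longrightarrow> alpha2 \<Longrightarrow> alpha3 \<Longrightarrow> alpha4\<close> and
  \<open>locally_Ramsey \<Longrightarrow> alpha3m \<Longrightarrow> alpha4\<close> hold in every space, and Ramsey implies \<open>alpha4\<close>
  after shifting the \<open>n\<close>-th sequence by \<open>1 / (n + 1)\<close>. Conversely, \<open>alpha4\<close> gives the diagonal
  property: perturbed so that their value at a fixed point encodes the row index, the rows become
  disjoint sequences converging to \<open>0\<close>, and a sequence meeting infinitely many of them yields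
  the diagonal.\<close>

lemma topspace_Cp:
  "topspace (Cp X) = {f \<in> extensional (topspace X). continuous_map X euclideanreal f}"
  unfolding Cp_def by (auto simp: PiE_def)

lemma continuous_map_Cp_eval:
  assumes "p \<in> topspace X"
  shows "continuous_map (Cp X) euclideanreal (\<lambda>f. f p)"
  unfolding Cp_def
  by (rule continuous_map_from_subtopology)
     (use assms in \<open>auto intro: continuous_map_product_projection[where X="\<lambda>_. euclideanreal", simplified]\<close>)

lemma Hausdorff_space_Cp: "Hausdorff_space (Cp X)"
  unfolding Cp_def by (intro Hausdorff_space_subtopology) (simp add: Hausdorff_space_product_topology)

lemma Cp_eqI:
  assumes "f \<in> topspace (Cp X)" "g \<in> topspace (Cp X)" "\<And>p. p \<in> topspace X \<Longrightarrow> f p = g p"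
  shows "f = g"
  using assms unfolding topspace_Cp by (auto intro: extensionalityI)

lemma restrict_in_topspace_Cp:
  "continuous_map X euclideanreal f \<Longrightarrow> restrict f (topspace X) \<in> topspace (Cp X)"
  unfolding topspace_Cp by (simp add: continuous_map_eq)

lemma Cp_basic_neighbourhood:
  assumes "openin (Cp X) U" "y \<in> U"
  obtains F e where "finite F" "F \<subseteq> topspace X" "e > 0"
    "\<And>f. f \<in> topspace (Cp X) \<Longrightarrow> (\<forall>p\<in>F. \<bar>f p - y p\<bar> < e) \<Longrightarrow> f \<in> U"
proof -
  define P where "P = product_topology (\<lambda>_. euclideanreal) (topspace X)"
  obtain V where V: "openin P V" "U = topspace (Cp X) \<inter> V"
    using assms(1) unfolding Cp_def P_def openin_subtopology by auto
  then obtain W where W: "finite {p \<in> topspace X. W p \<noteq> UNIV}" "\<And>p. p \<in> topspace X \<Longrightarrow> open (W p)"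
    "y \<in> Pi\<^sub>E (topspace X) W" "Pi\<^sub>E (topspace X) W \<subseteq> V"
    using assms(2) V unfolding P_def openin_product_topology_alt by auto
  define F where "F = {p \<in> topspace X. W p \<noteq> UNIV}"
  have "\<exists>d>0. ball (y p) d \<subseteq> W p" if "p \<in> F" for p
    proof -
    have "open (W p)" "y p \<in> W p" using that W(2,3) unfolding F_def by auto
    then show ?thesis by (rule openE) blast
  qed
  then obtain d where d: "\<And>p. p \<in> F \<Longrightarrow> d p > 0 \<and> ball (y p) (d p) \<subseteq> W p" by metis
  define e where "e = Min (insert 1 (d ` F))"
  have "finite F" using W(1) unfolding F_def .
  then have e: "e > 0" "\<And>p. p \<in> F \<Longrightarrow> e \<le> d p" unfolding e_def using d by auto
  moreover have "f \<in> U" if f: "f \<in> topspace (Cp X)" "\<forall>p\<in>F. \<bar>f p - y p\<bar> < e" for f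
  proof -
    have "f p \<in> W p" if "p \<in> topspace X" for p
    proof (cases "p \<in> F")
      case True
      then have "f p \<in> ball (y p) (d p)"
        using f(2) e(2)[OF True] True by (fastforce simp: dist_real_def abs_minus_commute)
      then show ?thesis using d True by blast
    qed (use that F_def in auto)
    then have "f \<in> Pi\<^sub>E (topspace X) W" using f(1) unfolding topspace_Cp by (auto simp: PiE_def)
    then show "f \<in> U" using V W f(1) by blast
  qed
  ultimately show ?thesis using that \<open>finite F\<close> unfolding F_def by blast
qed
lemma eventually_subset_open_Cp:
  assumes "openin (Cp X) U" "y \<in> U" "\<And>a. B a \<subseteq> topspace (Cp X)"
    and "\<And>p e. p \<in> topspace X \<Longrightarrow> e > 0 \<Longrightarrow> eventually (\<lambda>a. \<forall>f\<in>B a. \<bar>f p - y p\<bar> < e) F"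
  shows "eventually (\<lambda>a. B a \<subseteq> U) F"
proof -
  obtain P e where P: "finite P" "P \<subseteq> topspace X" "e > 0"
    and U: "\<And>f. f \<in> topspace (Cp X) \<Longrightarrow> (\<forall>p\<in>P. \<bar>f p - y p\<bar> < e) \<Longrightarrow> f \<in> U"
    using Cp_basic_neighbourhood[OF assms(1,2)] by blast
  have "eventually (\<lambda>a. \<forall>p\<in>P. \<forall>f\<in>B a. \<bar>f p - y p\<bar> < e) F"
    using P assms(4) by (intro eventually_ball_finite) auto
  then show ?thesis
    by (rule eventually_mono) (use U assms(3) in blast)
qed

lemma seq_lim_Cp_iff:
  assumes "y \<in> topspace (Cp X)"
  shows "seq_lim (Cp X) s y \<longleftrightarrow> (\<forall>m. s m \<in> topspace (Cp X) \<and> s m \<noteq> y) \<and>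
           (\<forall>p\<in>topspace X. (\<lambda>m. s m p) \<longlonglongrightarrow> y p)"
proof safe
  fix p assume L: "seq_lim (Cp X) s y" and p: "p \<in> topspace X"
  show "(\<lambda>m. s m p) \<longlonglongrightarrow> y p"
  proof (rule topological_tendstoI)
    fix V assume "open V" "y p \<in> V"
    then have "openin (Cp X) {f \<in> topspace (Cp X). f p \<in> V}" "y \<in> {f \<in> topspace (Cp X). f p \<in> V}"
      using openin_continuous_map_preimage[OF continuous_map_Cp_eval[OF p]] assms by auto
    then show "\<forall>\<^sub>F m in sequentially. s m p \<in> V"
      using L unfolding seq_lim_def by (force elim: eventually_mono)
  qed
next
  assume s: "\<forall>m. s m \<in> topspace (Cp X) \<and> s m \<noteq> y" and lim: "\<forall>p\<in>topspace X. (\<lambda>m. s m p) \<longlonglongrightarrow> y p"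
  have "\<forall>\<^sub>F m in sequentially. {s m} \<subseteq> U" if "openin (Cp X) U" "y \<in> U" for U
  proof (rule eventually_subset_open_Cp[OF that])
    fix p and e :: real assume "p \<in> topspace X" "e > 0"
    then show "\<forall>\<^sub>F m in sequentially. \<forall>f\<in>{s m}. \<bar>f p - y p\<bar> < e"
      using lim tendstoD[of "\<lambda>m. s m p" "y p" sequentially e] by (simp add: dist_real_def)
  qed (use s in auto)
  then show "seq_lim (Cp X) s y" using s unfolding seq_lim_def by simp
qed (auto simp: seq_lim_def)

lemma conv_set_CpI:
  assumes "A \<subseteq> topspace (Cp X)" "countable A" "infinite A" "y \<notin> A"
    and "\<And>p e. p \<in> topspace X \<Longrightarrow> e > 0 \<Longrightarrow> finite {f \<in> A. \<bar>f p - y p\<bar> \<ge> e}"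
  shows "conv_set (Cp X) A y"
proof -
  have "finite (A - U)" if "openin (Cp X) U" "y \<in> U" for U
  proof -
    have "\<forall>\<^sub>\<infinity>f. {f} \<inter> A \<subseteq> U"
    proof (rule eventually_subset_open_Cp[OF that])
      fix p and e :: real assume "p \<in> topspace X" "e > 0"
      then have "finite {f \<in> A. \<bar>f p - y p\<bar> \<ge> e}" by (rule assms(5))
      then show "\<forall>\<^sub>\<infinity>f. \<forall>g\<in>{f} \<inter> A. \<bar>g p - y p\<bar> < e"
        unfolding eventually_cofinite by (rule rev_finite_subset) auto
    qed (use assms(1) in auto)
    then show ?thesis unfolding eventually_cofinite by (rule rev_finite_subset) auto
  qed
  then show ?thesis using assms(1-4) unfolding conv_set_def by blast
qed

section \<open>Convergent sequences and the \<open>\<alpha>\<close>-properties in general spaces\<close>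

lemma seq_lim_range_infinite:
  assumes "Hausdorff_space Y" "y \<in> topspace Y" "seq_lim Y s y"
  shows "infinite (range s)"
proof
  assume "finite (range s)"
  moreover have "range s \<subseteq> topspace Y" using assms(3) unfolding seq_lim_def by auto
  ultimately have "openin Y (topspace Y - range s)"
    using Hausdorff_imp_t1_space[OF assms(1)] t1_space_closedin_finite by blast
  moreover have "y \<in> topspace Y - range s" using assms(2,3) unfolding seq_lim_def by auto
  ultimately have "\<forall>\<^sub>F m in sequentially. s m \<in> topspace Y - range s"
    using assms(3) unfolding seq_lim_def by blast
  then show False by (auto simp: eventually_sequentially)
qed

lemma conv_set_range:
  assumes "Hausdorff_space Y" "y \<in> topspace Y" "seq_lim Y s y"
  shows "conv_set Y (range s) y"
  unfolding conv_set_def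
proof (intro conjI allI impI)
  show "range s \<subseteq> topspace Y" "y \<notin> range s" using assms(3) unfolding seq_lim_def by auto
  show "infinite (range s)" using seq_lim_range_infinite[OF assms] .
  fix U assume "openin Y U \<and> y \<in> U"
  then have "finite {m. s m \<notin> U}"
    using assms(3) unfolding seq_lim_def cofinite_eq_sequentially[symmetric] eventually_cofinite by blast
  then have "finite (s ` {m. s m \<notin> U})" by blast
  then show "finite (range s - U)" by (rule rev_finite_subset) auto
qed simp

lemma seq_lim_inj_into_conv_set:
  assumes "conv_set Y T y" "inj s" "range s \<subseteq> T"
  shows "seq_lim Y s y"
  unfolding seq_lim_def
proof (intro conjI allI impI)
  fix m show "s m \<in> topspace Y" "s m \<noteq> y" using assms(1,3) unfolding conv_set_def by auto
next
  fix U assume "openin Y U \<and> y \<in> U"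
  then have "finite (s -` (T - U))" using assms(1,2) unfolding conv_set_def by (simp add: finite_vimageI)
  then have "finite {m. s m \<notin> U}" by (rule rev_finite_subset) (use assms(3) in auto)
  then show "\<forall>\<^sub>F m in sequentially. s m \<in> U"
    unfolding cofinite_eq_sequentially[symmetric] eventually_cofinite by simp
qed

lemma seq_lim_subseq: "seq_lim Y s y \<Longrightarrow> strict_mono r \<Longrightarrow> seq_lim Y (s \<circ> r) y"
  unfolding seq_lim_def by (auto intro: eventually_subseq)

lemma conv_set_enumerate:
  assumes "conv_set Y A y"
  shows "\<exists>e. inj e \<and> range e = A \<and> seq_lim Y e y"
proof -
  have "bij_betw (from_nat_into A) UNIV A"
    using assms unfolding conv_set_def by (intro bij_betw_from_nat_into) auto
  then have "inj (from_nat_into A)" "range (from_nat_into A) = A" unfolding bij_betw_def by auto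
  then show ?thesis using seq_lim_inj_into_conv_set[OF assms] by blast
qed

lemma conv_sets_enumerate:
  fixes S :: "nat \<Rightarrow> 'a set"
  assumes "\<And>n. conv_set Y (S n) y"
  obtains e :: "nat \<Rightarrow> nat \<Rightarrow> 'a" where "\<And>n. inj (e n)" "\<And>n. range (e n) = S n" "\<And>n. seq_lim Y (e n) y"
proof -
  have "\<forall>n. \<exists>e. inj e \<and> range e = S n \<and> seq_lim Y e y"
    using conv_set_enumerate[OF assms] by blast
  then obtain e where "\<forall>n. inj (e n) \<and> range (e n) = S n \<and> seq_lim Y (e n) y"
    by (auto dest: choice)
  then show ?thesis using that by blast
qed

lemma alpha2I:
  assumes "\<And>y (S :: nat \<Rightarrow> 'a set). y \<in> topspace Y \<Longrightarrow> disjoint_family S \<Longrightarrow>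
    (\<And>n. conv_set Y (S n) y) \<Longrightarrow> \<exists>T\<subseteq>(\<Union>n. S n). conv_set Y T y \<and> (\<forall>n. infinite (S n \<inter> T))"
  shows "alpha2 Y"
  unfolding alpha2_def
proof (intro ballI allI impI)
  fix y and S :: "nat \<Rightarrow> 'a set"
  assume "y \<in> topspace Y" "(\<forall>n m. n \<noteq> m \<longrightarrow> S n \<inter> S m = {}) \<and> (\<forall>n. conv_set Y (S n) y)"
  then show "\<exists>T\<subseteq>(\<Union>n. S n). conv_set Y T y \<and> (\<forall>n. infinite (S n \<inter> T))"
    by (intro assms) (auto simp: disjoint_family_on_def)
qed

lemma alpha2D:
  fixes S :: "nat \<Rightarrow> 'a set"
  assumes "alpha2 Y" "y \<in> topspace Y" "disjoint_family S" "\<And>n. conv_set Y (S n) y"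
  obtains T where "T \<subseteq> (\<Union>n. S n)" "conv_set Y T y" "\<And>n. infinite (S n \<inter> T)"
proof -
  have "(\<forall>n m. n \<noteq> m \<longrightarrow> S n \<inter> S m = {}) \<and> (\<forall>n. conv_set Y (S n) y)"
    using assms(3,4) unfolding disjoint_family_on_def by blast
  then have "\<exists>T. T \<subseteq> (\<Union>n. S n) \<and> conv_set Y T y \<and> (\<forall>n. infinite (S n \<inter> T))"
    by (rule mp[OF spec[OF bspec[OF assms(1)[unfolded alpha2_def] assms(2)]]])
  then show ?thesis by (auto intro: that)
qed

lemma alpha3I:
  assumes "\<And>y (S :: nat \<Rightarrow> 'a set). y \<in> topspace Y \<Longrightarrow> disjoint_family S \<Longrightarrow>
    (\<And>n. conv_set Y (S n) y) \<Longrightarrow> \<exists>T\<subseteq>(\<Union>n. S n). conv_set Y T y \<and> infinite {n. infinite (S n \<inter> T)}"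
  shows "alpha3 Y"
  unfolding alpha3_def
proof (intro ballI allI impI)
  fix y and S :: "nat \<Rightarrow> 'a set"
  assume "y \<in> topspace Y" "(\<forall>n m. n \<noteq> m \<longrightarrow> S n \<inter> S m = {}) \<and> (\<forall>n. conv_set Y (S n) y)"
  then show "\<exists>T\<subseteq>(\<Union>n. S n). conv_set Y T y \<and> infinite {n. infinite (S n \<inter> T)}"
    by (intro assms) (auto simp: disjoint_family_on_def)
qed

lemma alpha3D:
  fixes S :: "nat \<Rightarrow> 'a set"
  assumes "alpha3 Y" "y \<in> topspace Y" "disjoint_family S" "\<And>n. conv_set Y (S n) y"
  obtains T where "T \<subseteq> (\<Union>n. S n)" "conv_set Y T y" "infinite {n. infinite (S n \<inter> T)}"
proof -
  have "(\<forall>n m. n \<noteq> m \<longrightarrow> S n \<inter> S m = {}) \<and> (\<forall>n. conv_set Y (S n) y)"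
    using assms(3,4) unfolding disjoint_family_on_def by blast
  then have "\<exists>T. T \<subseteq> (\<Union>n. S n) \<and> conv_set Y T y \<and> infinite {n. infinite (S n \<inter> T)}"
    by (rule mp[OF spec[OF bspec[OF assms(1)[unfolded alpha3_def] assms(2)]]])
  then show ?thesis by (auto intro: that)
qed

lemma alpha4I:
  assumes "\<And>y (S :: nat \<Rightarrow> 'a set). y \<in> topspace Y \<Longrightarrow> disjoint_family S \<Longrightarrow>
    (\<And>n. conv_set Y (S n) y) \<Longrightarrow> \<exists>T\<subseteq>(\<Union>n. S n). conv_set Y T y \<and> infinite {n. S n \<inter> T \<noteq> {}}"
  shows "alpha4 Y"
  unfolding alpha4_def
proof (intro ballI allI impI)
  fix y and S :: "nat \<Rightarrow> 'a set"
  assume "y \<in> topspace Y" "(\<forall>n m. n \<noteq> m \<longrightarrow> S n \<inter> S m = {}) \<and> (\<forall>n. conv_set Y (S n) y)"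
  then show "\<exists>T\<subseteq>(\<Union>n. S n). conv_set Y T y \<and> infinite {n. S n \<inter> T \<noteq> {}}"
    by (intro assms) (auto simp: disjoint_family_on_def)
qed

lemma alpha4D:
  fixes S :: "nat \<Rightarrow> 'a set"
  assumes "alpha4 Y" "y \<in> topspace Y" "disjoint_family S" "\<And>n. conv_set Y (S n) y"
  obtains T where "T \<subseteq> (\<Union>n. S n)" "conv_set Y T y" "infinite {n. S n \<inter> T \<noteq> {}}"
proof -
  have "(\<forall>n m. n \<noteq> m \<longrightarrow> S n \<inter> S m = {}) \<and> (\<forall>n. conv_set Y (S n) y)"
    using assms(3,4) unfolding disjoint_family_on_def by blast
  then have "\<exists>T. T \<subseteq> (\<Union>n. S n) \<and> conv_set Y T y \<and> infinite {n. S n \<inter> T \<noteq> {}}"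
    by (rule mp[OF spec[OF bspec[OF assms(1)[unfolded alpha4_def] assms(2)]]])
  then show ?thesis by (auto intro: that)
qed

lemma alpha2mD:
  fixes x :: "nat \<Rightarrow> nat \<Rightarrow> 'a"
  assumes "alpha2m Y" "y \<in> topspace Y" "\<And>n. seq_lim Y (x n) y"
  obtains \<mu> where "strict_mono \<mu>" "conv_set Y (\<Union>n. {x k (\<mu> n) | k. k \<le> n}) y"
proof -
  have "\<forall>n. seq_lim Y (x n) y" using assms(3) by blast
  then have "\<exists>\<mu>. strict_mono \<mu> \<and> conv_set Y (\<Union>n. {x k (\<mu> n) | k. k \<le> n}) y"
    by (rule mp[OF spec[OF bspec[OF assms(1)[unfolded alpha2m_def] assms(2)]]])
  then show ?thesis by (auto intro: that)
qed

lemma alpha3mD: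
  fixes x :: "nat \<Rightarrow> nat \<Rightarrow> 'a"
  assumes "alpha3m Y" "y \<in> topspace Y" "\<And>n. seq_lim Y (x n) y"
  obtains I J where "infinite I" "infinite J" "conv_set Y {x n m | n m. n \<in> I \<and> m \<in> J \<and> n < m} y"
proof -
  have "\<forall>n. seq_lim Y (x n) y" using assms(3) by blast
  then have "\<exists>I J. infinite I \<and> infinite J \<and> conv_set Y {x n m | n m. n \<in> I \<and> m \<in> J \<and> n < m} y"
    by (rule mp[OF spec[OF bspec[OF assms(1)[unfolded alpha3m_def] assms(2)]]])
  then show ?thesis by (auto intro: that)
qed

lemma RamseyD:
  fixes x :: "nat \<Rightarrow> nat \<Rightarrow> 'a"
  assumes "Ramsey Y" "y \<in> topspace Y" "\<And>n. seq_lim Y (x n) (z n)" "seq_lim Y z y"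
  shows "\<exists>I. infinite I \<and> (\<forall>U. openin Y U \<and> y \<in> U \<longrightarrow>
    (\<exists>k. {x n m | n m. k < n \<and> n < m \<and> n \<in> I \<and> m \<in> I} \<subseteq> U))"
proof -
  have "(\<forall>n. seq_lim Y (x n) (z n)) \<and> seq_lim Y z y" using assms(3,4) by blast
  then show ?thesis by (rule mp[OF spec[OF spec[OF bspec[OF assms(1)[unfolded Ramsey_def] assms(2)], of x], of z]])
qed

lemma alpha4_finite_space: "finite (topspace Y) \<Longrightarrow> alpha4 Y"
proof (rule alpha4I)
  fix y and S :: "nat \<Rightarrow> 'a set"
  assume "finite (topspace Y)" "\<And>n. conv_set Y (S n) y"
  then have False using finite_subset[of "S 0" "topspace Y"] unfolding conv_set_def by blast
  then show "\<exists>T\<subseteq>(\<Union>n. S n). conv_set Y T y \<and> infinite {n. S n \<inter> T \<noteq> {}}" ..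
qed

lemma alpha2_imp_alpha3: "alpha2 Y \<Longrightarrow> alpha3 Y"
proof (rule alpha3I)
  fix y and S :: "nat \<Rightarrow> _"
  assume a2: "alpha2 Y" and y: "y \<in> topspace Y"
    and disj: "disjoint_family S" and conv: "\<And>n. conv_set Y (S n) y"
  obtain T where "T \<subseteq> (\<Union>n. S n)" "conv_set Y T y" "\<And>n. infinite (S n \<inter> T)"
    by (rule alpha2D[where S=S, OF a2 y disj conv]) (rule that)
  then show "\<exists>T\<subseteq>(\<Union>n. S n). conv_set Y T y \<and> infinite {n. infinite (S n \<inter> T)}" by auto
qed

lemma alpha3_imp_alpha4: "alpha3 Y \<Longrightarrow> alpha4 Y"
proof (rule alpha4I)
  fix y and S :: "nat \<Rightarrow> _"
  assume "alpha3 Y" "y \<in> topspace Y" "disjoint_family S" "\<And>n. conv_set Y (S n) y"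
  then obtain T where T: "T \<subseteq> (\<Union>n. S n)" "conv_set Y T y" "infinite {n. infinite (S n \<inter> T)}"
    by (rule alpha3D[where S=S])
  have "{n. infinite (S n \<inter> T)} \<subseteq> {n. S n \<inter> T \<noteq> {}}" by auto
  then show "\<exists>T\<subseteq>(\<Union>n. S n). conv_set Y T y \<and> infinite {n. S n \<inter> T \<noteq> {}}"
    using T infinite_super by blast
qed

lemma locally_Ramsey_imp_alpha3m: "locally_Ramsey Y \<Longrightarrow> alpha3m Y"
  unfolding locally_Ramsey_def alpha3m_def by blast

lemma alpha3m_imp_alpha4: "alpha3m Y \<Longrightarrow> alpha4 Y"
proof (rule alpha4I)
  fix y and S :: "nat \<Rightarrow> _"
  assume a3m: "alpha3m Y" and y: "y \<in> topspace Y" and S: "\<And>n. conv_set Y (S n) y"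
  obtain e where e: "\<And>n. range (e n) = S n" "\<And>n. seq_lim Y (e n) y"
    by (rule conv_sets_enumerate[where S=S, OF S]) (rule that)
  obtain I J where IJ: "infinite I" "infinite J" "conv_set Y {e n m | n m. n \<in> I \<and> m \<in> J \<and> n < m} y"
    by (rule alpha3mD[OF a3m y e(2)])
  define T where "T = {e n m | n m. n \<in> I \<and> m \<in> J \<and> n < m}"
  have "I \<subseteq> {n. S n \<inter> T \<noteq> {}}"
  proof
    fix n assume "n \<in> I"
    moreover obtain m where "m \<in> J" "n < m" using IJ(2) by (meson infinite_nat_iff_unbounded)
    ultimately have "e n m \<in> S n \<inter> T" unfolding T_def e(1)[symmetric] by blast
    then show "n \<in> {n. S n \<inter> T \<noteq> {}}" by blast
  qed
  then have "infinite {n. S n \<inter> T \<noteq> {}}" using IJ(1) infinite_super by blast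
  moreover have "T \<subseteq> (\<Union>n. S n)" unfolding T_def e(1)[symmetric] by blast
  ultimately show "\<exists>T\<subseteq>(\<Union>n. S n). conv_set Y T y \<and> infinite {n. S n \<inter> T \<noteq> {}}"
    using IJ(3) unfolding T_def by blast
qed

lemma alpha2m_imp_alpha2: "alpha2m Y \<Longrightarrow> alpha2 Y"
proof (rule alpha2I)
  fix y and S :: "nat \<Rightarrow> _"
  assume a2m: "alpha2m Y" and y: "y \<in> topspace Y" and S: "\<And>n. conv_set Y (S n) y"
  obtain e where e: "\<And>n. inj (e n)" "\<And>n. range (e n) = S n" "\<And>n. seq_lim Y (e n) y"
    by (rule conv_sets_enumerate[where S=S, OF S]) (rule that)
  obtain \<mu> where \<mu>: "strict_mono \<mu>" "conv_set Y (\<Union>n. {e k (\<mu> n) | k. k \<le> n}) y"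
    by (rule alpha2mD[OF a2m y e(3)])
  define T where "T = (\<Union>n. {e k (\<mu> n) | k. k \<le> n})"
  have "infinite (S k \<inter> T)" for k
  proof -
    have "inj_on (e k \<circ> \<mu>) {k..}"
      using inj_compose[OF e(1) strict_mono_imp_inj_on[OF \<mu>(1)]] by (rule inj_on_subset) simp
    then have "infinite ((e k \<circ> \<mu>) ` {k..})" using finite_imageD infinite_Ici by blast
    moreover have "(e k \<circ> \<mu>) ` {k..} \<subseteq> S k \<inter> T" unfolding T_def e(2)[symmetric] by auto
    ultimately show ?thesis using infinite_super by blast
  qed
  moreover have "T \<subseteq> (\<Union>n. S n)" unfolding T_def e(2)[symmetric] by blast
  ultimately show "\<exists>T\<subseteq>(\<Union>n. S n). conv_set Y T y \<and> (\<forall>n. infinite (S n \<inter> T))"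
    using \<mu>(2) unfolding T_def by blast
qed

section \<open>The diagonal property implies the properties of \<open>Cp X\<close>\<close>

definition null_diagonalizable :: "'a topology \<Rightarrow> bool" where
  "null_diagonalizable X \<longleftrightarrow> (\<forall>G :: nat \<Rightarrow> nat \<Rightarrow> 'a \<Rightarrow> real.
     (\<forall>n m. continuous_map X euclideanreal (G n m)) \<and> (\<forall>n m p. 0 \<le> G n m p) \<and>
     (\<forall>n. \<forall>p\<in>topspace X. (\<lambda>m. G n m p) \<longlonglongrightarrow> 0) \<longrightarrow>
     (\<exists>\<mu>. strict_mono \<mu> \<and> (\<forall>p\<in>topspace X. (\<lambda>n. G n (\<mu> n) p) \<longlonglongrightarrow> 0)))"

lemma null_diagonalizableD:
  fixes G :: "nat \<Rightarrow> nat \<Rightarrow> 'a \<Rightarrow> real"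
  assumes "null_diagonalizable X" "\<And>n m. continuous_map X euclideanreal (G n m)" "\<And>n m p. 0 \<le> G n m p"
    "\<And>n. \<forall>p\<in>topspace X. (\<lambda>m. G n m p) \<longlonglongrightarrow> 0"
  shows "\<exists>\<mu>. strict_mono \<mu> \<and> (\<forall>p\<in>topspace X. (\<lambda>n. G n (\<mu> n) p) \<longlonglongrightarrow> 0)"
  using assms unfolding null_diagonalizable_def by blast

text \<open>Applied to the shifted rows \<open>G n (m + n + 1)\<close>, the diagonal becomes a chain
  \<open>i 0 < i 1 < \<dots>\<close> of indices with \<open>i (t + 1) = \<mu> (i t) + i t + 1\<close>.\<close>
lemma null_diagonalizable_chain:
  fixes G :: "nat \<Rightarrow> nat \<Rightarrow> 'a \<Rightarrow> real"
  assumes "null_diagonalizable X" "\<And>n m. continuous_map X euclideanreal (G n m)" "\<And>n m p. 0 \<le> G n m p"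
    "\<And>n. \<forall>p\<in>topspace X. (\<lambda>m. G n m p) \<longlonglongrightarrow> 0"
  shows "\<exists>i. strict_mono i \<and> (\<forall>p\<in>topspace X. (\<lambda>t. G (i t) (i (Suc t)) p) \<longlonglongrightarrow> 0)"
proof -
  have "\<forall>p\<in>topspace X. (\<lambda>m. G n (m + Suc n) p) \<longlonglongrightarrow> 0" for n
    using assms(4) LIMSEQ_ignore_initial_segment by blast
  then obtain \<mu> where \<mu>: "\<forall>p\<in>topspace X. (\<lambda>n. G n (\<mu> n + Suc n) p) \<longlonglongrightarrow> 0"
    using null_diagonalizableD[OF assms(1), of "\<lambda>n m. G n (m + Suc n)"] assms(2,3) by blast
  define i where "i t = ((\<lambda>n. \<mu> n + Suc n) ^^ t) 0" for t
  have i_Suc: "i (Suc t) = \<mu> (i t) + Suc (i t)" for t unfolding i_def by simp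
  have "strict_mono i" unfolding strict_mono_Suc_iff i_Suc by simp
  moreover have "(\<lambda>t. G (i t) (i (Suc t)) p) \<longlonglongrightarrow> 0" if "p \<in> topspace X" for p
    using LIMSEQ_subseq_LIMSEQ[OF bspec[OF \<mu> that] \<open>strict_mono i\<close>] unfolding i_Suc comp_def .
  ultimately show ?thesis by blast
qed

lemma continuous_map_deviation_sum:
  fixes x :: "nat \<Rightarrow> nat \<Rightarrow> 'a \<Rightarrow> real"
  assumes "\<And>k m. x k m \<in> topspace (Cp X)" "\<And>k. z k \<in> topspace (Cp X)"
  shows "continuous_map X euclideanreal (\<lambda>p. \<Sum>k\<le>n. \<bar>x k m p - z k p\<bar>)"
  using assms unfolding topspace_Cp
  by (intro continuous_map_sum continuous_map_real_abs continuous_map_diff) auto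

lemma deviation_sum_tendsto_zero:
  fixes x :: "nat \<Rightarrow> nat \<Rightarrow> 'a \<Rightarrow> real"
  assumes "\<And>k. (\<lambda>m. x k m p) \<longlonglongrightarrow> z k p"
  shows "(\<lambda>m. \<Sum>k\<le>n. \<bar>x k m p - z k p\<bar>) \<longlonglongrightarrow> 0"
  using assms by (intro tendsto_null_sum tendsto_rabs_zero LIM_zero)

lemma deviation_le_sum:
  fixes x :: "nat \<Rightarrow> nat \<Rightarrow> 'a \<Rightarrow> real"
  shows "k \<le> n \<Longrightarrow> \<bar>x k m p - z k p\<bar> \<le> (\<Sum>j\<le>n. \<bar>x j m p - z j p\<bar>)"
  by (rule member_le_sum) auto

text \<open>Summing the deviations of the first \<open>n\<close> rows lets a single chain control all rows at once.\<close>
lemma null_diagonalizable_Ramsey_chain: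
  fixes x :: "nat \<Rightarrow> nat \<Rightarrow> 'a \<Rightarrow> real"
  assumes "null_diagonalizable X" "\<And>n m. x n m \<in> topspace (Cp X)" "\<And>n. z n \<in> topspace (Cp X)"
    "\<And>n. \<forall>p\<in>topspace X. (\<lambda>m. x n m p) \<longlonglongrightarrow> z n p"
  shows "\<exists>i :: nat \<Rightarrow> nat. strict_mono i \<and>
    (\<forall>p\<in>topspace X. \<forall>e>0. \<exists>k. \<forall>s t. k \<le> s \<longrightarrow> s < t \<longrightarrow> \<bar>x (i s) (i t) p - z (i s) p\<bar> < e)"
proof -
  define G where "G n m p = (\<Sum>k\<le>n. \<bar>x k m p - z k p\<bar>)" for n m p
  have "continuous_map X euclideanreal (G n m)" for n m
    unfolding G_def using assms(2,3) by (rule continuous_map_deviation_sum)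
  moreover have "0 \<le> G n m p" for n m p unfolding G_def by (simp add: sum_nonneg)
  moreover have "\<forall>p\<in>topspace X. (\<lambda>m. G n m p) \<longlonglongrightarrow> 0" for n
    unfolding G_def using assms(4) by (blast intro: deviation_sum_tendsto_zero)
  ultimately obtain i where i: "strict_mono i" "\<forall>p\<in>topspace X. (\<lambda>t. G (i t) (i (Suc t)) p) \<longlonglongrightarrow> 0"
    using null_diagonalizable_chain[OF assms(1)] by blast
  have "\<exists>k. \<forall>s t. k \<le> s \<longrightarrow> s < t \<longrightarrow> \<bar>x (i s) (i t) p - z (i s) p\<bar> < e"
    if p: "p \<in> topspace X" and e: "e > 0" for p e
  proof -
    obtain k where k: "\<And>t. t \<ge> k \<Longrightarrow> G (i t) (i (Suc t)) p < e"
      using LIMSEQ_D[OF bspec[OF i(2) p] e] by fastforce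
    have "\<bar>x (i s) (i t) p - z (i s) p\<bar> < e" if "k \<le> s" "s < t" for s t
    proof -
      obtain t' where t': "t = Suc t'" "s \<le> t'" using \<open>s < t\<close> by (cases t) auto
      then have "i s \<le> i t'" using i(1) by (simp add: strict_mono_less_eq)
      then have "\<bar>x (i s) (i t) p - z (i s) p\<bar> \<le> G (i t') (i (Suc t')) p"
        unfolding G_def t'(1) by (rule deviation_le_sum)
      also have "\<dots> < e" using k \<open>k \<le> s\<close> t'(2) by simp
      finally show ?thesis .
    qed
    then show ?thesis by blast
  qed
  with i(1) show ?thesis by blast
qed

lemma finite_far_indices:
  fixes a :: "nat \<Rightarrow> real"
  assumes "a \<longlonglongrightarrow> b" "e > 0"
  shows "finite {m. e \<le> \<bar>a m - b\<bar>}"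
proof -
  have "\<forall>\<^sub>F m in sequentially. \<bar>a m - b\<bar> < e"
    using tendstoD[OF assms] by (simp add: dist_real_def)
  then show ?thesis unfolding cofinite_eq_sequentially[symmetric] eventually_cofinite by (simp add: not_less)
qed

lemma null_diagonalizable_imp_alpha2m_Cp:
  assumes "null_diagonalizable X" shows "alpha2m (Cp X)"
  unfolding alpha2m_def
proof (intro ballI allI impI)
  fix y and x :: "nat \<Rightarrow> nat \<Rightarrow> _"
  assume y: "y \<in> topspace (Cp X)" and x_lim: "\<forall>n. seq_lim (Cp X) (x n) y"
  then have x: "\<And>n m. x n m \<in> topspace (Cp X)" "\<And>n m. x n m \<noteq> y"
    and lim: "\<And>n. \<forall>p\<in>topspace X. (\<lambda>m. x n m p) \<longlonglongrightarrow> y p"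
    using seq_lim_Cp_iff[OF y] by auto
  define G where "G n m p = (\<Sum>k\<le>n. \<bar>x k m p - y p\<bar>)" for n m p
  have "continuous_map X euclideanreal (G n m)" for n m
    unfolding G_def using x(1) y by (rule continuous_map_deviation_sum)
  moreover have "0 \<le> G n m p" for n m p unfolding G_def by (simp add: sum_nonneg)
  moreover have "\<forall>p\<in>topspace X. (\<lambda>m. G n m p) \<longlonglongrightarrow> 0" for n
    unfolding G_def using lim by (blast intro: deviation_sum_tendsto_zero[where z="\<lambda>_. y"])
  ultimately obtain \<mu> where \<mu>: "strict_mono \<mu>" "\<forall>p\<in>topspace X. (\<lambda>n. G n (\<mu> n) p) \<longlonglongrightarrow> 0"
    using null_diagonalizableD[OF assms] by blast
  define A where "A = (\<Union>n. (\<lambda>k. x k (\<mu> n)) ` {..n})"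
  have "conv_set (Cp X) A y"
  proof (rule conv_set_CpI)
    show "A \<subseteq> topspace (Cp X)" "y \<notin> A" using x unfolding A_def by auto
    show "countable A" unfolding A_def by (intro countable_UN countable_image) (simp_all add: countable_finite)
    have "infinite (range (x 0 \<circ> \<mu>))"
      using seq_lim_range_infinite[OF Hausdorff_space_Cp y seq_lim_subseq[OF spec[OF x_lim] \<mu>(1)]] .
    moreover have "range (x 0 \<circ> \<mu>) \<subseteq> A" unfolding A_def by auto
    ultimately show "infinite A" using infinite_super by blast
    fix p and e :: real assume p: "p \<in> topspace X" and e: "e > 0"
    obtain N where N: "\<And>n. n \<ge> N \<Longrightarrow> G n (\<mu> n) p < e"
      using LIMSEQ_D[OF bspec[OF \<mu>(2) p] e] by fastforce
    have "{f \<in> A. e \<le> \<bar>f p - y p\<bar>} \<subseteq> (\<Union>n<N. (\<lambda>k. x k (\<mu> n)) ` {..n})"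
    proof
      fix f assume "f \<in> {f \<in> A. e \<le> \<bar>f p - y p\<bar>}"
      then obtain n k where f: "f = x k (\<mu> n)" and k: "k \<le> n" and far: "e \<le> \<bar>x k (\<mu> n) p - y p\<bar>"
        unfolding A_def by blast
      have "\<bar>x k (\<mu> n) p - y p\<bar> \<le> G n (\<mu> n) p"
        unfolding G_def using deviation_le_sum[OF k, of x "\<mu> n" p "\<lambda>_. y"] by simp
      then have "n < N" using N far by (meson leI less_le_trans not_less)
      then show "f \<in> (\<Union>n<N. (\<lambda>k. x k (\<mu> n)) ` {..n})" using f k by blast
    qed
    then show "finite {f \<in> A. e \<le> \<bar>f p - y p\<bar>}" by (rule finite_subset) simp
  qed
  moreover have "A = (\<Union>n. {x k (\<mu> n) | k. k \<le> n})" unfolding A_def by blast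
  ultimately show "\<exists>\<mu>. strict_mono \<mu> \<and> conv_set (Cp X) (\<Union>n. {x k (\<mu> n) | k. k \<le> n}) y"
    using \<mu>(1) by auto
qed

lemma null_diagonalizable_imp_locally_Ramsey_Cp:
  assumes "null_diagonalizable X" shows "locally_Ramsey (Cp X)"
  unfolding locally_Ramsey_def
proof (intro ballI allI impI)
  fix y and x :: "nat \<Rightarrow> nat \<Rightarrow> _"
  assume y: "y \<in> topspace (Cp X)" and x_lim: "\<forall>n. seq_lim (Cp X) (x n) y"
  then have x: "\<And>n m. x n m \<in> topspace (Cp X)" "\<And>n m. x n m \<noteq> y"
    and lim: "\<And>n. \<forall>p\<in>topspace X. (\<lambda>m. x n m p) \<longlonglongrightarrow> y p"
    using seq_lim_Cp_iff[OF y] by auto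
  obtain i :: "nat \<Rightarrow> nat" where i: "strict_mono i"
    and close: "\<forall>p\<in>topspace X. \<forall>e>0. \<exists>k. \<forall>s t. k \<le> s \<longrightarrow> s < t \<longrightarrow> \<bar>x (i s) (i t) p - y p\<bar> < e"
    using null_diagonalizable_Ramsey_chain[of X x "\<lambda>_. y", OF assms x(1) y lim] by blast
  define B where "B = {x (i s) (i t) | s t. s < t}"
  have "conv_set (Cp X) B y"
  proof (rule conv_set_CpI)
    show "B \<subseteq> topspace (Cp X)" "y \<notin> B" using x unfolding B_def by auto
    have "B \<subseteq> (\<lambda>(s, t). x (i s) (i t)) ` UNIV" unfolding B_def by auto
    then show "countable B" by (rule countable_subset) simp
    have "strict_mono (i \<circ> Suc)" using i by (simp add: strict_mono_Suc_iff)
    then have "infinite (range (x (i 0) \<circ> (i \<circ> Suc)))"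
      using seq_lim_range_infinite[OF Hausdorff_space_Cp y seq_lim_subseq[OF spec[OF x_lim]]] by blast
    moreover have "range (x (i 0) \<circ> (i \<circ> Suc)) \<subseteq> B" unfolding B_def by force
    ultimately show "infinite B" using infinite_super by blast
    fix p and e :: real assume p: "p \<in> topspace X" and e: "e > 0"
    obtain k where k: "\<And>s t. k \<le> s \<Longrightarrow> s < t \<Longrightarrow> \<bar>x (i s) (i t) p - y p\<bar> < e"
      using close p e by blast
    have "{f \<in> B. e \<le> \<bar>f p - y p\<bar>} \<subseteq> (\<Union>s<k. (\<lambda>t. x (i s) (i t)) ` {t. e \<le> \<bar>x (i s) (i t) p - y p\<bar>})"
    proof
      fix f assume "f \<in> {f \<in> B. e \<le> \<bar>f p - y p\<bar>}"
      then obtain s t where f: "f = x (i s) (i t)" "s < t" and far: "e \<le> \<bar>x (i s) (i t) p - y p\<bar>"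
        unfolding B_def by blast
      then have "s < k" using k by (meson leI not_le)
      then show "f \<in> (\<Union>s<k. (\<lambda>t. x (i s) (i t)) ` {t. e \<le> \<bar>x (i s) (i t) p - y p\<bar>})"
        using f far by blast
    qed
    moreover have "finite {t. e \<le> \<bar>x (i s) (i t) p - y p\<bar>}" for s
      using finite_far_indices[OF LIMSEQ_subseq_LIMSEQ[OF bspec[OF lim p] i] e] by (simp add: comp_def)
    then have "finite (\<Union>s<k. (\<lambda>t. x (i s) (i t)) ` {t. e \<le> \<bar>x (i s) (i t) p - y p\<bar>})" by blast
    ultimately show "finite {f \<in> B. e \<le> \<bar>f p - y p\<bar>}" by (rule finite_subset)
  qed
  moreover have "B = {x n m | n m. n \<in> range i \<and> m \<in> range i \<and> n < m}"
    unfolding B_def using strict_mono_less[OF i] by blast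
  moreover have "infinite (range i)" using strict_mono_imp_inj_on[OF i] range_inj_infinite by blast
  ultimately show "\<exists>I. infinite I \<and> conv_set (Cp X) {x n m | n m. n \<in> I \<and> m \<in> I \<and> n < m} y"
    by auto
qed

lemma null_diagonalizable_imp_Ramsey_Cp:
  assumes "null_diagonalizable X" shows "Ramsey (Cp X)"
  unfolding Ramsey_def
proof (intro ballI allI impI)
  fix y and x :: "nat \<Rightarrow> nat \<Rightarrow> _" and z
  assume y: "y \<in> topspace (Cp X)"
    and lims: "(\<forall>n. seq_lim (Cp X) (x n) (z n)) \<and> seq_lim (Cp X) z y"
  then have z: "\<And>n. z n \<in> topspace (Cp X)" and z_lim: "\<forall>p\<in>topspace X. (\<lambda>n. z n p) \<longlonglongrightarrow> y p"
    using seq_lim_Cp_iff[OF y] by auto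
  have x: "\<And>n m. x n m \<in> topspace (Cp X)" and x_lim: "\<And>n. \<forall>p\<in>topspace X. (\<lambda>m. x n m p) \<longlonglongrightarrow> z n p"
    using lims seq_lim_Cp_iff[OF z] by auto
  obtain i :: "nat \<Rightarrow> nat" where i: "strict_mono i"
    and close: "\<forall>p\<in>topspace X. \<forall>e>0. \<exists>k. \<forall>s t. k \<le> s \<longrightarrow> s < t \<longrightarrow> \<bar>x (i s) (i t) p - z (i s) p\<bar> < e"
    using null_diagonalizable_Ramsey_chain[of X x z, OF assms x z x_lim] by blast
  define B where "B k = {x n m | n m. k < n \<and> n < m \<and> n \<in> range i \<and> m \<in> range i}" for k
  have near: "\<forall>\<^sub>F k in sequentially. \<forall>f\<in>B k. \<bar>f p - y p\<bar> < e" if p: "p \<in> topspace X" and e: "e > 0" for p e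
  proof -
    obtain k where k: "\<And>s t. k \<le> s \<Longrightarrow> s < t \<Longrightarrow> \<bar>x (i s) (i t) p - z (i s) p\<bar> < e / 2"
      using close p e by (metis half_gt_zero)
    have "(\<lambda>s. z (i s) p) \<longlonglongrightarrow> y p"
      using LIMSEQ_subseq_LIMSEQ[OF bspec[OF z_lim p] i] by (simp add: comp_def)
    then obtain K where K: "\<And>s. K \<le> s \<Longrightarrow> \<bar>z (i s) p - y p\<bar> < e / 2"
      using LIMSEQ_D[of _ _ "e / 2"] e by fastforce
    have "\<forall>f\<in>B k'. \<bar>f p - y p\<bar> < e" if "i (k + K) \<le> k'" for k'
    proof
      fix f assume "f \<in> B k'"
      then obtain s t where f: "f = x (i s) (i t)" "k' < i s" "i s < i t" unfolding B_def by blast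
      then have "i (k + K) < i s" using that by linarith
      then have "k + K < s" "s < t" using f(3) strict_mono_less[OF i] by auto
      then have "\<bar>x (i s) (i t) p - z (i s) p\<bar> < e / 2" "\<bar>z (i s) p - y p\<bar> < e / 2"
        using k K by simp_all
      then show "\<bar>f p - y p\<bar> < e" unfolding f(1) by linarith
    qed
    then show ?thesis unfolding eventually_sequentially by blast
  qed
  have "\<exists>k. B k \<subseteq> U" if "openin (Cp X) U" "y \<in> U" for U
  proof -
    have "\<forall>\<^sub>F k in sequentially. B k \<subseteq> U"
      by (rule eventually_subset_open_Cp[OF that _ near]) (use x in \<open>auto simp: B_def\<close>)
    then show ?thesis unfolding eventually_sequentially by blast
  qed
  moreover have "infinite (range i)" using strict_mono_imp_inj_on[OF i] range_inj_infinite by blast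
  ultimately show "\<exists>I. infinite I \<and> (\<forall>U. openin (Cp X) U \<and> y \<in> U \<longrightarrow>
      (\<exists>k. {x n m | n m. k < n \<and> n < m \<and> n \<in> I \<and> m \<in> I} \<subseteq> U))"
    unfolding B_def by blast
qed

section \<open>Ramsey implies \<open>\<alpha>\<^sub>4\<close> in \<open>Cp X\<close>\<close>

lemma openin_Cp_coordinate_ball:
  assumes "p \<in> topspace X"
  shows "openin (Cp X) {f \<in> topspace (Cp X). \<bar>f p - y p\<bar> < e}"
  using openin_continuous_map_preimage[OF continuous_map_Cp_eval[OF assms], of "ball (y p) e"]
  by (simp add: dist_real_def abs_minus_commute)

definition shift_Cp :: "'a topology \<Rightarrow> real \<Rightarrow> ('a \<Rightarrow> real) \<Rightarrow> 'a \<Rightarrow> real" where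
  "shift_Cp X c f = restrict (\<lambda>p. f p + c) (topspace X)"

lemma shift_Cp_apply: "p \<in> topspace X \<Longrightarrow> shift_Cp X c f p = f p + c"
  unfolding shift_Cp_def by simp

lemma shift_Cp_in_topspace: "f \<in> topspace (Cp X) \<Longrightarrow> shift_Cp X c f \<in> topspace (Cp X)"
  unfolding shift_Cp_def topspace_Cp
  by (intro restrict_in_topspace_Cp[unfolded topspace_Cp] continuous_map_add) auto

lemma shift_Cp_inject:
  assumes "f \<in> topspace (Cp X)" "g \<in> topspace (Cp X)" "shift_Cp X c f = shift_Cp X c g"
  shows "f = g"
proof (rule Cp_eqI[OF assms(1,2)])
  fix p assume "p \<in> topspace X"
  then show "f p = g p" using fun_cong[OF assms(3), of p] by (simp add: shift_Cp_apply)
qed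

lemma seq_lim_shift_Cp:
  assumes "y \<in> topspace (Cp X)" "seq_lim (Cp X) s y"
  shows "seq_lim (Cp X) (\<lambda>m. shift_Cp X c (s m)) (shift_Cp X c y)"
proof -
  have s: "\<forall>m. s m \<in> topspace (Cp X) \<and> s m \<noteq> y" "\<forall>p\<in>topspace X. (\<lambda>m. s m p) \<longlonglongrightarrow> y p"
    using assms seq_lim_Cp_iff by blast+
  have "(\<lambda>m. shift_Cp X c (s m) p) \<longlonglongrightarrow> shift_Cp X c y p" if "p \<in> topspace X" for p
    using tendsto_add[OF bspec[OF s(2) that] tendsto_const[of c]] that by (simp add: shift_Cp_apply)
  moreover have "shift_Cp X c (s m) \<noteq> shift_Cp X c y" for m
    using s(1) shift_Cp_inject assms(1) by blast
  ultimately show ?thesis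
    unfolding seq_lim_Cp_iff[OF shift_Cp_in_topspace[OF assms(1)]] using s(1) shift_Cp_in_topspace by blast
qed

lemma seq_lim_shift_Cp_zero:
  assumes "y \<in> topspace (Cp X)" "topspace X \<noteq> {}" "c \<longlonglongrightarrow> 0" "\<And>n. c n \<noteq> 0"
  shows "seq_lim (Cp X) (\<lambda>n. shift_Cp X (c n) y) y"
proof -
  obtain p where p: "p \<in> topspace X" using assms(2) by blast
  have "shift_Cp X (c n) y \<noteq> y" for n
    using p assms(4)[of n] by (metis add_cancel_left_right shift_Cp_apply)
  moreover have "(\<lambda>n. shift_Cp X (c n) y p) \<longlonglongrightarrow> y p" if "p \<in> topspace X" for p
    using tendsto_add[OF tendsto_const assms(3), of "y p"] that by (simp add: shift_Cp_apply)
  ultimately show ?thesis unfolding seq_lim_Cp_iff[OF assms(1)] using shift_Cp_in_topspace[OF assms(1)] by blast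
qed

lemma finite_topspace_Cp_empty: "topspace X = {} \<Longrightarrow> finite (topspace (Cp X))"
  unfolding topspace_Cp by (rule finite_subset[of _ "{\<lambda>_. undefined}"]) (auto simp: extensional_def)

text \<open>Shifting the \<open>n\<close>-th sequence by \<open>1 / (n + 1)\<close> turns sequences converging to \<open>y\<close> into a
  Ramsey configuration \<open>x n m \<longlonglongrightarrow> z n \<longlonglongrightarrow> y\<close>.\<close>
lemma Ramsey_Cp_imp_alpha4_Cp:
  assumes R: "Ramsey (Cp X)" shows "alpha4 (Cp X)"
proof (cases "topspace X = {}")
  case True
  then show ?thesis by (intro alpha4_finite_space finite_topspace_Cp_empty)
next
  case False
  show ?thesis
  proof (rule alpha4I)
    fix y and S :: "nat \<Rightarrow> _"
    assume y: "y \<in> topspace (Cp X)" and conv: "\<And>n. conv_set (Cp X) (S n) y"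
    obtain e where e: "\<And>n. inj (e n)" "\<And>n. range (e n) = S n" "\<And>n. seq_lim (Cp X) (e n) y"
      by (rule conv_sets_enumerate[where S=S, OF conv]) (rule that)
    then have e_Cp: "\<And>n m. e n m \<in> topspace (Cp X)" "\<And>n m. e n m \<noteq> y"
      and e_lim: "\<And>n. \<forall>p\<in>topspace X. (\<lambda>m. e n m p) \<longlonglongrightarrow> y p"
      using seq_lim_Cp_iff[OF y] by auto
    define c where "c n = inverse (real (Suc n))" for n
    have c: "c \<longlonglongrightarrow> 0" "\<And>n. c n > 0" "\<And>n. c n \<noteq> 0"
      unfolding c_def using LIMSEQ_inverse_real_of_nat by auto
    obtain I where I: "infinite I" and I_close: "\<forall>U. openin (Cp X) U \<and> y \<in> U \<longrightarrow>
        (\<exists>k. {shift_Cp X (c n) (e n m) | n m. k < n \<and> n < m \<and> n \<in> I \<and> m \<in> I} \<subseteq> U)"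
      using RamseyD[where x="\<lambda>n m. shift_Cp X (c n) (e n m)" and z="\<lambda>n. shift_Cp X (c n) y",
          OF R y seq_lim_shift_Cp[OF y e(3)] seq_lim_shift_Cp_zero[OF y False c(1,3)]]
      by (elim exE conjE) (rule that)
    define T where "T = {e n m | n m. n \<in> I \<and> m \<in> I \<and> n < m}"
    have "conv_set (Cp X) T y"
    proof (rule conv_set_CpI)
      show "T \<subseteq> topspace (Cp X)" "y \<notin> T" using e_Cp unfolding T_def by auto
      have "T \<subseteq> (\<lambda>(n, m). e n m) ` UNIV" unfolding T_def by auto
      then show "countable T" by (rule countable_subset) simp
      obtain n0 where n0: "n0 \<in> I" using I by (metis finite.emptyI ex_in_conv)
      have "infinite (I - {..n0})" using I by simp
      then have "infinite (e n0 ` (I - {..n0}))"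
        using finite_imageD inj_on_subset[OF e(1) subset_UNIV] by blast
      moreover have "e n0 ` (I - {..n0}) \<subseteq> T" unfolding T_def using n0 by force
      ultimately show "infinite T" using infinite_super by blast
      fix p and \<epsilon> :: real assume p: "p \<in> topspace X" and \<epsilon>: "\<epsilon> > 0"
      obtain k where k: "\<And>n m. k < n \<Longrightarrow> n < m \<Longrightarrow> n \<in> I \<Longrightarrow> m \<in> I \<Longrightarrow>
          \<bar>shift_Cp X (c n) (e n m) p - y p\<bar> < \<epsilon> / 2"
        using I_close openin_Cp_coordinate_ball[OF p, of y "\<epsilon> / 2"] y \<epsilon> by fastforce
      obtain N where N: "\<And>n. n \<ge> N \<Longrightarrow> c n < \<epsilon> / 2"
        using LIMSEQ_D[OF c(1), of "\<epsilon> / 2"] \<epsilon> c(2) by fastforce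
      have "{f \<in> T. \<epsilon> \<le> \<bar>f p - y p\<bar>} \<subseteq> (\<Union>n\<le>k + N. e n ` {m. \<epsilon> \<le> \<bar>e n m p - y p\<bar>})"
      proof
        fix f assume "f \<in> {f \<in> T. \<epsilon> \<le> \<bar>f p - y p\<bar>}"
        then obtain n m where f: "f = e n m" "n \<in> I" "m \<in> I" "n < m" and far: "\<epsilon> \<le> \<bar>e n m p - y p\<bar>"
          unfolding T_def by blast
        have "n \<le> k + N"
        proof (rule ccontr)
          assume "\<not> n \<le> k + N"
          then have "\<bar>e n m p + c n - y p\<bar> < \<epsilon> / 2" "c n < \<epsilon> / 2"
            using k[of n m] f N[of n] p by (auto simp: shift_Cp_apply)
          then show False using far c(2)[of n] by linarith
        qed
        then show "f \<in> (\<Union>n\<le>k + N. e n ` {m. \<epsilon> \<le> \<bar>e n m p - y p\<bar>})" using f far by blast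
      qed
      moreover have "finite (\<Union>n\<le>k + N. e n ` {m. \<epsilon> \<le> \<bar>e n m p - y p\<bar>})"
        using finite_far_indices[OF bspec[OF e_lim p] \<epsilon>] by blast
      ultimately show "finite {f \<in> T. \<epsilon> \<le> \<bar>f p - y p\<bar>}" by (rule finite_subset)
    qed
    moreover have "T \<subseteq> (\<Union>n. S n)" unfolding T_def e(2)[symmetric] by blast
    moreover have "I \<subseteq> {n. S n \<inter> T \<noteq> {}}"
    proof
      fix n assume "n \<in> I"
      moreover obtain m where "m \<in> I" "n < m" using I by (meson infinite_nat_iff_unbounded)
      ultimately have "e n m \<in> S n \<inter> T" unfolding T_def e(2)[symmetric] by blast
      then show "n \<in> {n. S n \<inter> T \<noteq> {}}" by blast
    qed
    then have "infinite {n. S n \<inter> T \<noteq> {}}" using I infinite_super by blast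
    ultimately show "\<exists>T\<subseteq>(\<Union>n. S n). conv_set (Cp X) T y \<and> infinite {n. S n \<inter> T \<noteq> {}}" by blast
  qed
qed

section \<open>\<open>\<alpha>\<^sub>4\<close> in \<open>Cp X\<close> implies the diagonal property\<close>

lemma alpha4_diagonal_selection:
  fixes h :: "nat \<Rightarrow> nat \<Rightarrow> 'a"
  assumes "alpha4 Y" "Hausdorff_space Y" "y \<in> topspace Y" "\<And>n. seq_lim Y (h n) y"
    and "\<forall>n m n' m'. h n m = h n' m' \<longrightarrow> n = n'"
  shows "\<exists>\<nu> \<sigma>. strict_mono \<nu> \<and> seq_lim Y (\<lambda>t. h (\<nu> t) (\<sigma> t)) y"
proof -
  define S where "S n = range (h n)" for n
  have "disjoint_family S" unfolding disjoint_family_on_def S_def using assms(5) by blast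
  moreover have "conv_set Y (S n) y" for n unfolding S_def using assms(2-4) by (rule conv_set_range)
  ultimately obtain T where T: "conv_set Y T y" "infinite {n. S n \<inter> T \<noteq> {}}"
    using alpha4D[OF assms(1,3)] by metis
  define N where "N = {n. S n \<inter> T \<noteq> {}}"
  define \<nu> where "\<nu> = enumerate N"
  have \<nu>: "strict_mono \<nu>" "\<And>t. \<nu> t \<in> N"
    using T(2) strict_mono_enumerate enumerate_in_set unfolding \<nu>_def N_def by blast+
  define \<sigma> where "\<sigma> n = (SOME m. h n m \<in> T)" for n
  have \<sigma>: "h n (\<sigma> n) \<in> T" if "n \<in> N" for n
    using that someI_ex[of "\<lambda>m. h n m \<in> T"] unfolding N_def S_def \<sigma>_def by blast
  have "inj (\<lambda>t. h (\<nu> t) (\<sigma> (\<nu> t)))"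
    using assms(5) strict_mono_eq[OF \<nu>(1)] by (intro injI) blast
  moreover have "range (\<lambda>t. h (\<nu> t) (\<sigma> (\<nu> t))) \<subseteq> T" using \<sigma> \<nu>(2) by blast
  ultimately have "seq_lim Y (\<lambda>t. h (\<nu> t) (\<sigma> (\<nu> t))) y"
    by (rule seq_lim_inj_into_conv_set[OF T(1)])
  with \<nu>(1) show ?thesis by (intro exI[of _ \<nu>] exI[of _ "\<sigma> \<circ> \<nu>"]) simp
qed

text \<open>The selected columns \<open>\<sigma> t\<close> need not increase; block sums over \<open>j \<le> n\<close> allow passing to the
  running minima \<open>v n = min {\<sigma> t | t \<ge> n}\<close>.\<close>
lemma diagonal_from_block_sums:
  fixes G :: "nat \<Rightarrow> nat \<Rightarrow> 'a \<Rightarrow> real" and \<nu> \<sigma> :: "nat \<Rightarrow> nat"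
  assumes "\<And>n m p. 0 \<le> G n m p" "strict_mono \<nu>"
    and "\<forall>p\<in>P. (\<lambda>t. \<Sum>k\<le>\<nu> t. \<Sum>j\<le>\<nu> t. G k (\<sigma> t + j) p) \<longlonglongrightarrow> 0"
  shows "\<exists>\<mu>. strict_mono \<mu> \<and> (\<forall>p\<in>P. (\<lambda>n. G n (\<mu> n) p) \<longlonglongrightarrow> 0)"
proof -
  define v where "v n = (LEAST v. \<exists>t\<ge>n. \<sigma> t = v)" for n
  have "\<exists>t\<ge>n. \<sigma> t = v n" for n
    unfolding v_def by (rule LeastI_ex) blast
  then obtain \<tau> where \<tau>: "\<And>n. n \<le> \<tau> n" "\<And>n. \<sigma> (\<tau> n) = v n" by metis
  have v_mono: "v n \<le> v (Suc n)" for n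
  proof -
    obtain t where "Suc n \<le> t" "\<sigma> t = v (Suc n)" using \<open>\<And>n. \<exists>t\<ge>n. \<sigma> t = v n\<close> by blast
    then have "\<exists>t\<ge>n. \<sigma> t = v (Suc n)" using Suc_leD by blast
    then show ?thesis unfolding v_def[of n] by (rule Least_le)
  qed
  define \<mu> where "\<mu> n = v n + n" for n
  have "strict_mono \<mu>" unfolding strict_mono_Suc_iff \<mu>_def using v_mono by (simp add: le_imp_less_Suc)
  moreover have "(\<lambda>n. G n (\<mu> n) p) \<longlonglongrightarrow> 0" if "p \<in> P" for p
  proof -
    define B where "B n = (\<Sum>k\<le>\<nu> (\<tau> n). \<Sum>j\<le>\<nu> (\<tau> n). G k (\<sigma> (\<tau> n) + j) p)" for n
    have "filterlim \<tau> sequentially sequentially"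
      by (rule filterlim_at_top_mono[OF filterlim_ident]) (use \<tau>(1) in auto)
    then have B_lim: "B \<longlonglongrightarrow> 0"
      unfolding B_def using filterlim_compose[OF bspec[OF assms(3) that]] by blast
    have bound: "G n (\<mu> n) p \<le> B n" for n
    proof -
      have "n \<le> \<nu> (\<tau> n)" using \<tau>(1)[of n] seq_suble[OF assms(2), of "\<tau> n"] by linarith
      then have "G n (\<sigma> (\<tau> n) + n) p \<le> (\<Sum>j\<le>\<nu> (\<tau> n). G n (\<sigma> (\<tau> n) + j) p)"
        using assms(1) by (intro member_le_sum) auto
      also have "\<dots> \<le> B n"
        unfolding B_def using \<open>n \<le> \<nu> (\<tau> n)\<close> assms(1)
        by (intro member_le_sum[of n _ "\<lambda>k. \<Sum>j\<le>\<nu> (\<tau> n). G k (\<sigma> (\<tau> n) + j) p"]) (auto intro: sum_nonneg)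
      finally show ?thesis by (simp add: \<mu>_def \<tau>(2))
    qed
    show ?thesis
      by (rule tendsto_sandwich[of "\<lambda>_. 0" _ _ B]) (simp_all add: assms(1) bound B_lim)
  qed
  ultimately show ?thesis by blast
qed

text \<open>The binary logarithm of \<open>dyadic_tag n E\<close> has fractional part \<open>1 / (n + 2)\<close>, which identifies \<open>n\<close>.\<close>
definition dyadic_tag :: "nat \<Rightarrow> real \<Rightarrow> real" where
  "dyadic_tag n E = 2 powr (of_int \<lceil>log 2 E - 1 / real (n + 2)\<rceil> + 1 / real (n + 2))"

lemma dyadic_tag_bounds:
  assumes "E > 0"
  shows "E \<le> dyadic_tag n E" "dyadic_tag n E < 2 * E"
proof -
  define l where "l = 1 / real (n + 2)"
  have "log 2 E \<le> of_int \<lceil>log 2 E - l\<rceil> + l" "of_int \<lceil>log 2 E - l\<rceil> + l < log 2 E + 1"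
    by linarith+
  then have "2 powr log 2 E \<le> 2 powr (of_int \<lceil>log 2 E - l\<rceil> + l)"
    "2 powr (of_int \<lceil>log 2 E - l\<rceil> + l) < 2 powr (log 2 E + 1)"
    by simp_all
  then show "E \<le> dyadic_tag n E" "dyadic_tag n E < 2 * E"
    using assms unfolding dyadic_tag_def l_def by (simp_all add: powr_add)
qed

lemma dyadic_tag_eq_imp_eq:
  assumes "dyadic_tag n E = dyadic_tag n' E'" shows "n = n'"
proof -
  define l l' where "l = 1 / real (n + 2)" and "l' = 1 / real (n' + 2)"
  define K K' where "K = \<lceil>log 2 E - l\<rceil>" and "K' = \<lceil>log 2 E' - l'\<rceil>"
  have "of_int K + l = of_int K' + l'"
    using assms powr_inj[of 2] unfolding dyadic_tag_def l_def l'_def K_def K'_def by simp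
  moreover have "0 < l" "l < 1" "0 < l'" "l' < 1" unfolding l_def l'_def by auto
  ultimately have "K = K'" by linarith
  then have "l = l'" using \<open>of_int K + l = of_int K' + l'\<close> by simp
  then show ?thesis unfolding l_def l'_def by simp
qed

text \<open>The value at \<open>p0\<close> tags each function with the index of its row, which makes the rows
  pairwise disjoint as required by \<open>alpha4\<close>; since the tag dominates \<open>H n m p0\<close>,
  \<open>\<bar>H n m p - H n m p0\<bar> + tag\<close> dominates \<open>H n m p\<close>.\<close>
lemma Cp_tagged_majorants:
  fixes H :: "nat \<Rightarrow> nat \<Rightarrow> 'a \<Rightarrow> real"
  assumes p0: "p0 \<in> topspace X" and H_cont: "\<And>n m. continuous_map X euclideanreal (H n m)"
    and H_nonneg: "\<And>n m p. 0 \<le> H n m p" and H_lim: "\<And>n. \<forall>p\<in>topspace X. (\<lambda>m. H n m p) \<longlonglongrightarrow> 0"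
  shows "\<exists>h. (\<forall>n. seq_lim (Cp X) (h n) (restrict (\<lambda>_. 0) (topspace X))) \<and>
    (\<forall>n m n' m'. h n m = h n' m' \<longrightarrow> n = n') \<and> (\<forall>n m. \<forall>p\<in>topspace X. H n m p \<le> h n m p)"
proof -
  define c where "c n m = dyadic_tag n (H n m p0 + inverse (real (Suc m)))" for n m
  have E_pos: "0 < H n m p0 + inverse (real (Suc m))" for n m
    using H_nonneg[of n m p0] by (simp add: add_nonneg_pos)
  have c_ge: "H n m p0 \<le> c n m" for n m
    using dyadic_tag_bounds(1)[OF E_pos, of n m n] inverse_nonnegative_iff_nonnegative[of "real (Suc m)"]
    unfolding c_def by linarith
  have c_pos: "0 < c n m" for n m
    using dyadic_tag_bounds(1)[OF E_pos, of n m n] E_pos[of n m] unfolding c_def by linarith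
  have "(\<lambda>m. c n m) \<longlonglongrightarrow> 0" for n
  proof (rule tendsto_sandwich[of "\<lambda>_. 0" _ _ "\<lambda>m. 2 * (H n m p0 + inverse (real (Suc m)))"])
    show "(\<lambda>m. 2 * (H n m p0 + inverse (real (Suc m)))) \<longlonglongrightarrow> 0"
      using tendsto_mult[OF tendsto_const tendsto_add[OF bspec[OF H_lim p0] LIMSEQ_inverse_real_of_nat], of 2]
      by simp
  qed (use c_pos dyadic_tag_bounds(2)[OF E_pos] in \<open>auto simp: c_def less_imp_le\<close>)
  define zero :: "'a \<Rightarrow> real" where "zero = restrict (\<lambda>_. 0) (topspace X)"
  define h where "h n m = restrict (\<lambda>p. \<bar>H n m p - H n m p0\<bar> + c n m) (topspace X)" for n m
  have h_apply: "h n m p = \<bar>H n m p - H n m p0\<bar> + c n m" if "p \<in> topspace X" for n m p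
    unfolding h_def using that by simp
  have zero: "zero \<in> topspace (Cp X)" unfolding zero_def by (rule restrict_in_topspace_Cp) simp
  have "seq_lim (Cp X) (h n) zero" for n
    unfolding seq_lim_Cp_iff[OF zero]
  proof (intro conjI allI ballI)
    fix m
    show "h n m \<in> topspace (Cp X)" unfolding h_def
      by (intro restrict_in_topspace_Cp continuous_map_add continuous_map_real_abs continuous_map_diff H_cont)
        simp_all
    show "h n m \<noteq> zero"
    proof
      assume "h n m = zero"
      then have "h n m p0 = zero p0" by simp
      then show False using h_apply[OF p0] c_pos[of n m] p0 by (simp add: zero_def)
    qed
  next
    fix p assume p: "p \<in> topspace X"
    have "(\<lambda>m. \<bar>H n m p - H n m p0\<bar> + c n m) \<longlonglongrightarrow> \<bar>0 - 0\<bar> + 0"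
      using bspec[OF H_lim p] bspec[OF H_lim p0] \<open>(\<lambda>m. c n m) \<longlonglongrightarrow> 0\<close>
      by (intro tendsto_add tendsto_rabs tendsto_diff)
    then show "(\<lambda>m. h n m p) \<longlonglongrightarrow> zero p" using p by (simp add: h_apply zero_def)
  qed
  moreover have "n = n'" if "h n m = h n' m'" for n m n' m'
    using fun_cong[OF that, of p0] h_apply[OF p0] dyadic_tag_eq_imp_eq unfolding c_def by simp
  moreover have "H n m p \<le> h n m p" if "p \<in> topspace X" for n m p
    using c_ge[of n m] h_apply[OF that, of n m] by linarith
  ultimately show ?thesis unfolding zero_def by blast
qed

lemma alpha4_Cp_imp_null_diagonalizable:
  assumes "alpha4 (Cp X)" shows "null_diagonalizable X"
  unfolding null_diagonalizable_def
proof (intro allI impI)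
  fix G :: "nat \<Rightarrow> nat \<Rightarrow> 'a \<Rightarrow> real"
  assume "(\<forall>n m. continuous_map X euclideanreal (G n m)) \<and> (\<forall>n m p. 0 \<le> G n m p) \<and>
    (\<forall>n. \<forall>p\<in>topspace X. (\<lambda>m. G n m p) \<longlonglongrightarrow> 0)"
  then have G_cont: "\<And>n m. continuous_map X euclideanreal (G n m)" and G_nonneg: "\<And>n m p. 0 \<le> G n m p"
    and G_lim: "\<And>n. \<forall>p\<in>topspace X. (\<lambda>m. G n m p) \<longlonglongrightarrow> 0"
    by blast+
  show "\<exists>\<mu>. strict_mono \<mu> \<and> (\<forall>p\<in>topspace X. (\<lambda>n. G n (\<mu> n) p) \<longlonglongrightarrow> 0)"
  proof (cases "topspace X = {}")
    case True
    then show ?thesis by (intro exI[of _ id]) (simp add: strict_mono_def)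
  next
    case False
    then obtain p0 where p0: "p0 \<in> topspace X" by blast
    define H where "H n m p = (\<Sum>k\<le>n. \<Sum>j\<le>n. G k (m + j) p)" for n m p
    have "continuous_map X euclideanreal (H n m)" for n m
      unfolding H_def by (intro continuous_map_sum G_cont) simp_all
    moreover have H_nonneg: "0 \<le> H n m p" for n m p unfolding H_def by (intro sum_nonneg G_nonneg)
    moreover have "\<forall>p\<in>topspace X. (\<lambda>m. H n m p) \<longlonglongrightarrow> 0" for n
      unfolding H_def using G_lim by (auto intro!: tendsto_null_sum LIMSEQ_ignore_initial_segment)
    ultimately obtain h where h_lim: "\<And>n. seq_lim (Cp X) (h n) (restrict (\<lambda>_. 0) (topspace X))"
      and h_tag: "\<forall>n m n' m'. h n m = h n' m' \<longrightarrow> n = n'"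
      and h_ge: "\<And>n m. \<forall>p\<in>topspace X. H n m p \<le> h n m p"
      using Cp_tagged_majorants[OF p0] by metis
    have zero: "restrict (\<lambda>_. 0) (topspace X) \<in> topspace (Cp X)" by (rule restrict_in_topspace_Cp) simp
    obtain \<nu> \<sigma> where \<nu>: "strict_mono \<nu>"
      and "seq_lim (Cp X) (\<lambda>t. h (\<nu> t) (\<sigma> t)) (restrict (\<lambda>_. 0) (topspace X))"
      using alpha4_diagonal_selection[where h=h, OF assms Hausdorff_space_Cp zero h_lim h_tag] by blast
    then have h_small: "(\<lambda>t. h (\<nu> t) (\<sigma> t) p) \<longlonglongrightarrow> 0" if "p \<in> topspace X" for p
      using that unfolding seq_lim_Cp_iff[OF zero] by auto
    have "(\<lambda>t. H (\<nu> t) (\<sigma> t) p) \<longlonglongrightarrow> 0" if "p \<in> topspace X" for p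
      by (rule tendsto_sandwich[of "\<lambda>_. 0" _ _ "\<lambda>t. h (\<nu> t) (\<sigma> t) p"])
        (use h_ge H_nonneg h_small that in auto)
    then have "\<forall>p\<in>topspace X. (\<lambda>t. H (\<nu> t) (\<sigma> t) p) \<longlonglongrightarrow> 0" by blast
    then show ?thesis unfolding H_def by (rule diagonal_from_block_sums[OF G_nonneg \<nu>])
  qed
qed

theorem corollary2p8:
  fixes X :: "'a topology"
  shows "(alpha2m (Cp X) \<longleftrightarrow> alpha2 (Cp X)) \<and>
         (alpha2 (Cp X) \<longleftrightarrow> alpha3m (Cp X)) \<and>
         (alpha3m (Cp X) \<longleftrightarrow> alpha3 (Cp X)) \<and>
         (alpha3 (Cp X) \<longleftrightarrow> alpha4 (Cp X)) \<and>
         (alpha4 (Cp X) \<longleftrightarrow> locally_Ramsey (Cp X)) \<and>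
         (locally_Ramsey (Cp X) \<longleftrightarrow> Ramsey (Cp X))"
proof -
  have "alpha4 (Cp X) \<longleftrightarrow> null_diagonalizable X"
    using alpha4_Cp_imp_null_diagonalizable null_diagonalizable_imp_alpha2m_Cp
      alpha2m_imp_alpha2 alpha2_imp_alpha3 alpha3_imp_alpha4 by blast
  moreover have "alpha2m (Cp X) \<longleftrightarrow> null_diagonalizable X" "alpha2 (Cp X) \<longleftrightarrow> null_diagonalizable X"
    "alpha3 (Cp X) \<longleftrightarrow> null_diagonalizable X"
    using calculation null_diagonalizable_imp_alpha2m_Cp
      alpha2m_imp_alpha2 alpha2_imp_alpha3 alpha3_imp_alpha4 by blast+
  moreover have "locally_Ramsey (Cp X) \<longleftrightarrow> null_diagonalizable X" "alpha3m (Cp X) \<longleftrightarrow> null_diagonalizable X"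
    using calculation null_diagonalizable_imp_locally_Ramsey_Cp
      locally_Ramsey_imp_alpha3m alpha3m_imp_alpha4 by blast+
  moreover have "Ramsey (Cp X) \<longleftrightarrow> null_diagonalizable X"
    using calculation null_diagonalizable_imp_Ramsey_Cp Ramsey_Cp_imp_alpha4_Cp by blast
  ultimately show ?thesis by blast
qed

end
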